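(* Under the distributed-delay standing assumptions, let $\{x_i\}_{i=1}^N$ be a solution of the distributed-delay Hegselmann–Krause system. Then for every $v\in\mathbb{R}^d$, every $T\ge 0$, every $i=1,\dots,N$ and every $t\ge T-\bar\tau$, $$\min_{j=1,\dots,N}\min_{s\in[T-\bar\tau,T]}\langle x_j(s),v\rangle\le\langle x_i(t),v\rangle\le\max_{j=1,\dots,N}\max_{s\in[T-\bar\tau,T]}\langle x_j(s),v\rangle.$$
   Context: Distributed-delay standing assumptions: $N\ge2$, $d\ge1$, $\bar\tau>0$; $\tau_1,\tau_2:[0,\infty)\to[0,\infty)$ continuous with $0\le\tau_1(t)<\tau_2(t)\le\bar\tau$ for all $t\ge0$; $\alpha:[0,\bar\tau]\to(0,\infty)$ continuous; $h(t):=\int_{\tau_1(t)}^{\tau_2(t)}\alpha(s)\,ds>0$; $\psi:\mathbb{R}^d\times\mathbb{R}^d\to\mathbb{R}$ continuous, bounded and strictly positive, $K:=\|\psi\|_\infty$; initial data $x_i^0:[-\bar\tau,0]\to\mathbb{R}^d$ continuous. The distributed-delay system is $$\frac{d}{dt}x_i(t)=\frac{1}{h(t)}\frac{1}{N-1}\sum_{j\ne i}\int_{t-\tau_2(t)}^{t-\tau_1(t)}\alpha(t-s)\,\psi(x_i(t),x_j(s))\,(x_j(s)-x_i(t))\,ds,\quad t>0,$$ with $x_i=x_i^0$ on $[-\bar\tau,0]$; a solution means continuous $x_i:[-\bar\tau,\infty)\to\mathbb{R}^d$, differentiable on $(0,\infty)$, satisfying the system there. $\langle\cdot,\cdot\rangle$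 is the Euclidean inner product. *)

theory Defs
  imports "HOL-Analysis.Analysis"
begin

definition hk_h :: "(real \<Rightarrow> real) \<Rightarrow> (real \<Rightarrow> real) \<Rightarrow> (real \<Rightarrow> real) \<Rightarrow> real \<Rightarrow> real" where
  "hk_h \<alpha> \<tau>1 \<tau>2 t = integral {\<tau>1 t..\<tau>2 t} \<alpha>"

definition hk_rhs ::
  "nat \<Rightarrow> (real \<Rightarrow> real) \<Rightarrow> (real \<Rightarrow> real) \<Rightarrow> (real \<Rightarrow> real) \<Rightarrow> ('d::euclidean_space \<Rightarrow> 'd \<Rightarrow> real)
    \<Rightarrow> (nat \<Rightarrow> real \<Rightarrow> 'd) \<Rightarrow> nat \<Rightarrow> real \<Rightarrow> 'd" where
  "hk_rhs N \<alpha> \<tau>1 \<tau>2 \<psi> x i t =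
     (1 / hk_h \<alpha> \<tau>1 \<tau>2 t) *\<^sub>R ((1 / (real N - 1)) *\<^sub>R
       (\<Sum>j\<in>{0..<N} - {i}.
          integral {t - \<tau>2 t .. t - \<tau>1 t}
            (\<lambda>s. (\<alpha> (t - s) * \<psi> (x i t) (x j s)) *\<^sub>R (x j s - x i t))))"

definition hk_solution ::
  "nat \<Rightarrow> real \<Rightarrow> (real \<Rightarrow> real) \<Rightarrow> (real \<Rightarrow> real) \<Rightarrow> (real \<Rightarrow> real) \<Rightarrow> ('d::euclidean_space \<Rightarrow> 'd \<Rightarrow> real)
    \<Rightarrow> (nat \<Rightarrow> real \<Rightarrow> 'd) \<Rightarrow> (nat \<Rightarrow> real \<Rightarrow> 'd) \<Rightarrow> bool" where
  "hk_solution N \<tau>bar \<alpha> \<tau>1 \<tau>2 \<psi> x0 x \<longleftrightarrow>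
     (\<forall>i<N. continuous_on {-\<tau>bar..} (x i)
        \<and> (\<forall>t\<in>{-\<tau>bar..0}. x i t = x0 i t)
        \<and> (\<forall>t>0. (x i has_vector_derivative hk_rhs N \<alpha> \<tau>1 \<tau>2 \<psi> x i t) (at t)))"

end

(* A barrier argument. Fix a direction v and let M bound every projection x_j(s).v on the
   window [T - taubar, T]. If some agent rose above the barrier M + eps (1 + s - T), look at
   the first crossing time and at the agent that leads in direction v at that time: it
   dominates all agents over its whole delay window, so every interaction term pulls it
   back, and its projection cannot grow, whereas the barrier grows with slope eps > 0.
   Letting eps tend to 0 gives the upper bound; the lower bound is the upper bound for -v.
   Only the sign of alpha and psi and the delay bounds enter. *)

theory Submission
  imports Defs
begin

text \<open>No integrability hypotheses are needed below: a non-integrable function has integral 0.\<close>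

lemma integral_nonneg_pointwise:
  fixes g :: "real \<Rightarrow> real"
  assumes "\<And>s. s \<in> S \<Longrightarrow> 0 \<le> g s"
  shows "0 \<le> integral S g"
  using assms integral_nonneg by (cases "g integrable_on S") (auto simp: not_integrable_integral)

lemma integral_inner_nonpos:
  fixes f :: "real \<Rightarrow> 'd::euclidean_space"
  assumes "\<And>s. s \<in> S \<Longrightarrow> f s \<bullet> v \<le> 0"
  shows "integral S f \<bullet> v \<le> 0"
proof (cases "f integrable_on S")
  case True
  have "integral S f \<bullet> v = integral S (\<lambda>s. f s \<bullet> v)"
    using integral_linear[OF True bounded_linear_inner_left[of v]] by (simp add: o_def)
  also have "\<dots> \<le> integral S (\<lambda>s. 0)"
    using integrable_linear[OF True bounded_linear_inner_left[of v]] assms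
    by (intro integral_le integrable_0) (auto simp: o_def)
  finally show ?thesis by simp
next
  case False
  then show ?thesis by (simp add: not_integrable_integral)
qed

lemma first_hitting_time:
  fixes f :: "'i \<Rightarrow> real \<Rightarrow> real"
  assumes "finite I" "a \<le> b"
    and cont: "\<And>j. j \<in> I \<Longrightarrow> continuous_on {a..b} (f j)"
    and start: "\<And>j. j \<in> I \<Longrightarrow> f j a < 0"
    and hit: "k \<in> I" "0 \<le> f k b"
  obtains s l where "s \<in> {a<..b}" "l \<in> I" "0 \<le> f l s" "\<And>j. j \<in> I \<Longrightarrow> f j s \<le> f l s"
    and "\<And>j r. j \<in> I \<Longrightarrow> r \<in> {a..<s} \<Longrightarrow> f j r < 0"
proof -
  define H where "H = (\<Union>j\<in>I. {s \<in> {a..b}. 0 \<le> f j s})"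
  have "closed H"
    unfolding H_def using \<open>finite I\<close> cont
    by (intro closed_UN ballI continuous_on_closed_Collect_le continuous_intros) auto
  moreover have "b \<in> H"
    using hit \<open>a \<le> b\<close> by (force simp: H_def)
  moreover have "bdd_below H"
    unfolding H_def by (rule bdd_belowI[of _ a]) auto
  ultimately have "Inf H \<in> H"
    using closed_contains_Inf by blast
  moreover have "Inf H \<noteq> a"
    using \<open>Inf H \<in> H\<close> start unfolding H_def by force
  ultimately have "Inf H \<in> {a<..b}"
    unfolding H_def by auto
  have "Max ((\<lambda>j. f j (Inf H)) ` I) \<in> (\<lambda>j. f j (Inf H)) ` I"
    using \<open>finite I\<close> \<open>k \<in> I\<close> by (intro Max_in) auto
  then obtain l where "l \<in> I" and l: "f l (Inf H) = Max ((\<lambda>j. f j (Inf H)) ` I)"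
    by auto
  have "0 \<le> f l (Inf H)"
    using \<open>Inf H \<in> H\<close> l \<open>finite I\<close> unfolding H_def by (force intro: order_trans[OF _ Max_ge])
  moreover have "f j r < 0" if "j \<in> I" "r \<in> {a..<Inf H}" for j r
  proof -
    have "r \<notin> H"
      using that cInf_lower[OF _ \<open>bdd_below H\<close>, of r] by auto
    with that \<open>Inf H \<in> {a<..b}\<close> show ?thesis
      unfolding H_def by force
  qed
  ultimately show ?thesis
    using that[OF \<open>Inf H \<in> {a<..b}\<close> \<open>l \<in> I\<close>] l \<open>finite I\<close> by simp
qed

lemma barrier_first_crossing:
  fixes u :: "'i \<Rightarrow> real \<Rightarrow> real" and b :: "real \<Rightarrow> real"
  assumes "finite I" "T \<le> t" "c \<le> T"
    and cont: "\<And>j. j \<in> I \<Longrightarrow> continuous_on {T..t} (u j)" and "continuous_on {T..t} b"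
    and "mono b"
    and past: "\<And>j s. j \<in> I \<Longrightarrow> s \<in> {c..T} \<Longrightarrow> u j s < b T"
    and hit: "i \<in> I" "b t \<le> u i t"
  obtains ts l where "ts \<in> {T<..t}" "l \<in> I" "b ts \<le> u l ts"
    and "\<And>j s. j \<in> I \<Longrightarrow> s \<in> {c..ts} \<Longrightarrow> u j s \<le> u l ts"
    and "\<And>j r. j \<in> I \<Longrightarrow> r \<in> {T..<ts} \<Longrightarrow> u j r < b r"
proof -
  define f where "f j = (\<lambda>s. u j s - b s)" for j
  have "continuous_on {T..t} (f j)" if "j \<in> I" for j
    unfolding f_def using cont[OF that] \<open>continuous_on {T..t} b\<close> by (intro continuous_intros)
  moreover have "f j T < 0" if "j \<in> I" for j
    using past[OF that, of T] \<open>c \<le> T\<close> by (simp add: f_def)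
  moreover have "0 \<le> f i t"
    using hit by (simp add: f_def)
  ultimately obtain ts l where "ts \<in> {T<..t}" "l \<in> I" "0 \<le> f l ts"
    and lead: "\<And>j. j \<in> I \<Longrightarrow> f j ts \<le> f l ts"
    and before: "\<And>j r. j \<in> I \<Longrightarrow> r \<in> {T..<ts} \<Longrightarrow> f j r < 0"
    using first_hitting_time[of I T t f i] \<open>finite I\<close> \<open>T \<le> t\<close> \<open>i \<in> I\<close> by blast
  have "b ts \<le> u l ts"
    using \<open>0 \<le> f l ts\<close> by (simp add: f_def)
  moreover have "u j s \<le> u l ts" if "j \<in> I" "s \<in> {c..ts}" for j s
  proof -
    consider "s \<le> T" | "T < s" "s < ts" | "s = ts"
      using \<open>s \<in> {c..ts}\<close> by fastforce
    then show ?thesis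
    proof cases
      case 1
      have "b T \<le> b ts"
        using \<open>ts \<in> {T<..t}\<close> \<open>mono b\<close> by (simp add: monoD)
      then show ?thesis
        using 1 past[of j s] that \<open>b ts \<le> u l ts\<close> by simp
    next
      case 2
      have "b s \<le> b ts"
        using 2 \<open>mono b\<close> by (simp add: monoD)
      then show ?thesis
        using 2 before[of j s] that \<open>b ts \<le> u l ts\<close> by (simp add: f_def)
    next
      case 3
      then show ?thesis
        using lead[OF \<open>j \<in> I\<close>] by (simp add: f_def)
    qed
  qed
  moreover have "u j r < b r" if "j \<in> I" "r \<in> {T..<ts}" for j r
    using before[OF that] by (simp add: f_def)
  ultimately show ?thesis
    using that \<open>ts \<in> {T<..t}\<close> \<open>l \<in> I\<close> by blast
qed

lemma neg_if_DERIV_neg_and_neg_on_left: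
  fixes g :: "real \<Rightarrow> real"
  assumes "(g has_real_derivative D) (at s)" "D < 0" "a < s"
    and "\<And>r. r \<in> {a..<s} \<Longrightarrow> g r < 0"
  shows "g s < 0"
proof -
  obtain d where "d > 0" and dec: "\<And>h. 0 < h \<Longrightarrow> h < d \<Longrightarrow> g s < g (s - h)"
    using DERIV_neg_dec_left[OF assms(1,2)] by blast
  define h where "h = min d (s - a) / 2"
  have "0 < h" "h < d" "s - h \<in> {a..<s}"
    using \<open>d > 0\<close> \<open>a < s\<close> by (auto simp: h_def min_def field_simps)
  then show ?thesis
    using dec assms(4) by (meson less_trans)
qed

lemma hk_solution_continuous_on:
  assumes "hk_solution N \<tau>bar \<alpha> \<tau>1 \<tau>2 \<psi> x0 x" "j < N" "S \<subseteq> {-\<tau>bar..}"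
  shows "continuous_on S (x j)"
  using assms unfolding hk_solution_def by (meson continuous_on_subset)

lemma hk_rhs_inner_nonpos:
  fixes \<psi> :: "'d::euclidean_space \<Rightarrow> 'd \<Rightarrow> real" and x :: "nat \<Rightarrow> real \<Rightarrow> 'd"
  assumes "i < N"
    and alpha_nonneg: "\<And>r. r \<in> {\<tau>1 t..\<tau>2 t} \<Longrightarrow> 0 \<le> \<alpha> r"
    and psi_nonneg: "\<And>a b. 0 \<le> \<psi> a b"
    and dominated: "\<And>j s. j < N \<Longrightarrow> j \<noteq> i \<Longrightarrow> s \<in> {t - \<tau>2 t..t - \<tau>1 t} \<Longrightarrow>
                       x j s \<bullet> v \<le> x i t \<bullet> v"
  shows "hk_rhs N \<alpha> \<tau>1 \<tau>2 \<psi> x i t \<bullet> v \<le> 0"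
proof -
  have "0 \<le> hk_h \<alpha> \<tau>1 \<tau>2 t"
    unfolding hk_h_def using alpha_nonneg by (rule integral_nonneg_pointwise)
  moreover have "0 \<le> 1 / (real N - 1)"
    using \<open>i < N\<close> by simp
  moreover have "integral {t - \<tau>2 t..t - \<tau>1 t}
      (\<lambda>s. (\<alpha> (t - s) * \<psi> (x i t) (x j s)) *\<^sub>R (x j s - x i t)) \<bullet> v \<le> 0"
    if "j \<in> {0..<N} - {i}" for j
  proof (rule integral_inner_nonpos)
    fix s assume s: "s \<in> {t - \<tau>2 t..t - \<tau>1 t}"
    have "0 \<le> \<alpha> (t - s) * \<psi> (x i t) (x j s)"
      using s alpha_nonneg[of "t - s"] psi_nonneg by simp
    moreover have "x j s \<bullet> v - x i t \<bullet> v \<le> 0"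
      using dominated[of j s] that s by simp
    ultimately show "((\<alpha> (t - s) * \<psi> (x i t) (x j s)) *\<^sub>R (x j s - x i t)) \<bullet> v \<le> 0"
      by (simp add: inner_diff_left mult_nonneg_nonpos)
  qed
  ultimately show ?thesis
    unfolding hk_rhs_def inner_scaleR_left inner_sum_left
    by (intro mult_nonneg_nonpos sum_nonpos) auto
qed

lemma hk_solution_leader_inner_deriv_nonpos:
  fixes \<psi> :: "'d::euclidean_space \<Rightarrow> 'd \<Rightarrow> real" and x x0 :: "nat \<Rightarrow> real \<Rightarrow> 'd"
  assumes sol: "hk_solution N \<tau>bar \<alpha> \<tau>1 \<tau>2 \<psi> x0 x"
    and "0 < t" "0 \<le> \<tau>1 t" "\<tau>2 t \<le> \<tau>bar"
    and alpha_nonneg: "\<And>r. r \<in> {0..\<tau>bar} \<Longrightarrow> 0 \<le> \<alpha> r"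
    and psi_nonneg: "\<And>a b. 0 \<le> \<psi> a b"
    and "i < N"
    and leader: "\<And>j s. j < N \<Longrightarrow> s \<in> {t - \<tau>bar..t} \<Longrightarrow> x j s \<bullet> v \<le> x i t \<bullet> v"
  obtains D where "D \<le> 0" "((\<lambda>s. x i s \<bullet> v) has_real_derivative D) (at t)"
proof
  show "hk_rhs N \<alpha> \<tau>1 \<tau>2 \<psi> x i t \<bullet> v \<le> 0"
  proof (rule hk_rhs_inner_nonpos[OF \<open>i < N\<close> _ psi_nonneg])
    show "0 \<le> \<alpha> r" if "r \<in> {\<tau>1 t..\<tau>2 t}" for r
      using that \<open>0 \<le> \<tau>1 t\<close> \<open>\<tau>2 t \<le> \<tau>bar\<close> by (intro alpha_nonneg) auto
    show "x j s \<bullet> v \<le> x i t \<bullet> v" if "j < N" "s \<in> {t - \<tau>2 t..t - \<tau>1 t}" for j s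
      using that \<open>0 \<le> \<tau>1 t\<close> \<open>\<tau>2 t \<le> \<tau>bar\<close> by (intro leader) auto
  qed
  have "(x i has_vector_derivative hk_rhs N \<alpha> \<tau>1 \<tau>2 \<psi> x i t) (at t)"
    using sol \<open>i < N\<close> \<open>0 < t\<close> unfolding hk_solution_def by simp
  then show "((\<lambda>s. x i s \<bullet> v) has_real_derivative hk_rhs N \<alpha> \<tau>1 \<tau>2 \<psi> x i t \<bullet> v) (at t)"
    using bounded_linear.has_vector_derivative[OF bounded_linear_inner_left]
    by (simp add: has_real_derivative_iff_has_vector_derivative)
qed

lemma hk_solution_inner_below_barrier:
  fixes \<psi> :: "'d::euclidean_space \<Rightarrow> 'd \<Rightarrow> real" and x x0 :: "nat \<Rightarrow> real \<Rightarrow> 'd"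
  assumes sol: "hk_solution N \<tau>bar \<alpha> \<tau>1 \<tau>2 \<psi> x0 x"
    and tau_bounds: "\<And>t. 0 \<le> t \<Longrightarrow> 0 \<le> \<tau>1 t \<and> \<tau>2 t \<le> \<tau>bar"
    and alpha_nonneg: "\<And>r. r \<in> {0..\<tau>bar} \<Longrightarrow> 0 \<le> \<alpha> r"
    and psi_nonneg: "\<And>a b. 0 \<le> \<psi> a b"
    and "0 \<le> \<tau>bar" "0 \<le> T" "0 < \<epsilon>"
    and bound: "\<And>j s. j < N \<Longrightarrow> s \<in> {T - \<tau>bar..T} \<Longrightarrow> x j s \<bullet> v \<le> M"
    and "i < N" "T \<le> t"
  shows "x i t \<bullet> v < M + \<epsilon> * (1 + (t - T))"
proof (rule ccontr)
  define b where "b = (\<lambda>s. M + \<epsilon> * (1 + (s - T)))"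
  assume "\<not> ?thesis"
  then have crossed: "b t \<le> x i t \<bullet> v"
    by (simp add: b_def)
  have cont: "continuous_on {T..t} (\<lambda>s. x j s \<bullet> v)" if "j \<in> {..<N}" for j
    using hk_solution_continuous_on[OF sol, of j "{T..t}"] that \<open>0 \<le> \<tau>bar\<close> \<open>0 \<le> T\<close>
    by (auto intro: continuous_intros)
  have "continuous_on {T..t} b" "mono b"
    unfolding b_def using \<open>0 < \<epsilon>\<close> by (auto intro!: continuous_intros monoI)
  have past: "x j s \<bullet> v < b T" if "j \<in> {..<N}" "s \<in> {T - \<tau>bar..T}" for j s
    using bound[of j s] that \<open>0 < \<epsilon>\<close> by (simp add: b_def)
  have "T - \<tau>bar \<le> T" "i \<in> {..<N}"
    using \<open>0 \<le> \<tau>bar\<close> \<open>i < N\<close> by auto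
  obtain ts l where "ts \<in> {T<..t}" "l \<in> {..<N}" "b ts \<le> x l ts \<bullet> v"
    and history: "\<And>j s. j \<in> {..<N} \<Longrightarrow> s \<in> {T - \<tau>bar..ts} \<Longrightarrow> x j s \<bullet> v \<le> x l ts \<bullet> v"
    and below: "\<And>j r. j \<in> {..<N} \<Longrightarrow> r \<in> {T..<ts} \<Longrightarrow> x j r \<bullet> v < b r"
    using barrier_first_crossing[of "{..<N}" T t "T - \<tau>bar" "\<lambda>j s. x j s \<bullet> v" b i,
        OF finite_lessThan \<open>T \<le> t\<close> \<open>T - \<tau>bar \<le> T\<close> cont \<open>continuous_on {T..t} b\<close> \<open>mono b\<close>
          past \<open>i \<in> {..<N}\<close> crossed]
    by blast
  have "l < N" "0 < ts" "0 \<le> \<tau>1 ts" "\<tau>2 ts \<le> \<tau>bar"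
    using \<open>l \<in> {..<N}\<close> \<open>ts \<in> {T<..t}\<close> \<open>0 \<le> T\<close> tau_bounds[of ts] by auto
  have leader: "x j s \<bullet> v \<le> x l ts \<bullet> v" if "j < N" "s \<in> {ts - \<tau>bar..ts}" for j s
    using history[of j s] that \<open>ts \<in> {T<..t}\<close> by simp
  obtain D where "D \<le> 0" and "((\<lambda>s. x l s \<bullet> v) has_real_derivative D) (at ts)"
    using hk_solution_leader_inner_deriv_nonpos[OF sol \<open>0 < ts\<close> \<open>0 \<le> \<tau>1 ts\<close> \<open>\<tau>2 ts \<le> \<tau>bar\<close>
        alpha_nonneg psi_nonneg \<open>l < N\<close> leader] .
  moreover have "(b has_real_derivative \<epsilon>) (at ts)"
    unfolding b_def by (auto intro!: derivative_eq_intros)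
  ultimately have deriv: "((\<lambda>s. x l s \<bullet> v - b s) has_real_derivative D - \<epsilon>) (at ts)"
    by (intro DERIV_diff)
  have "D - \<epsilon> < 0" "T < ts"
    using \<open>D \<le> 0\<close> \<open>0 < \<epsilon>\<close> \<open>ts \<in> {T<..t}\<close> by auto
  moreover have "x l r \<bullet> v - b r < 0" if "r \<in> {T..<ts}" for r
    using below[OF \<open>l \<in> {..<N}\<close> that] by simp
  ultimately have "(\<lambda>s. x l s \<bullet> v - b s) ts < 0"
    by (rule neg_if_DERIV_neg_and_neg_on_left[OF deriv])
  with \<open>b ts \<le> x l ts \<bullet> v\<close> show False
    by simp
qed

lemma hk_solution_inner_le_window_bound:
  fixes \<psi> :: "'d::euclidean_space \<Rightarrow> 'd \<Rightarrow> real" and x x0 :: "nat \<Rightarrow> real \<Rightarrow> 'd"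
  assumes sol: "hk_solution N \<tau>bar \<alpha> \<tau>1 \<tau>2 \<psi> x0 x"
    and tau_bounds: "\<And>t. 0 \<le> t \<Longrightarrow> 0 \<le> \<tau>1 t \<and> \<tau>2 t \<le> \<tau>bar"
    and alpha_nonneg: "\<And>r. r \<in> {0..\<tau>bar} \<Longrightarrow> 0 \<le> \<alpha> r"
    and psi_nonneg: "\<And>a b. 0 \<le> \<psi> a b"
    and "0 \<le> \<tau>bar" "0 \<le> T"
    and bound: "\<And>j s. j < N \<Longrightarrow> s \<in> {T - \<tau>bar..T} \<Longrightarrow> x j s \<bullet> v \<le> M"
    and "i < N" "T - \<tau>bar \<le> t"
  shows "x i t \<bullet> v \<le> M"
proof (cases "t \<le> T")
  case True
  then show ?thesis
    using bound \<open>i < N\<close> \<open>T - \<tau>bar \<le> t\<close> by simp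
next
  case False
  show ?thesis
  proof (rule field_le_epsilon)
    fix e :: real
    assume "0 < e"
    with False have "x i t \<bullet> v < M + e / (1 + (t - T)) * (1 + (t - T))"
      by (intro hk_solution_inner_below_barrier[OF sol tau_bounds alpha_nonneg psi_nonneg
            \<open>0 \<le> \<tau>bar\<close> \<open>0 \<le> T\<close> _ bound \<open>i < N\<close>]) auto
    with False show "x i t \<bullet> v \<le> M + e"
      by simp
  qed
qed

lemma bounded_inner_image_interval:
  fixes x :: "nat \<Rightarrow> real \<Rightarrow> 'd::real_inner"
  assumes "\<And>j. j < N \<Longrightarrow> continuous_on {a..b} (x j)"
  shows "bounded {x j s \<bullet> v | j s. j < N \<and> s \<in> {a..b}}"
proof -
  have "{x j s \<bullet> v | j s. j < N \<and> s \<in> {a..b}} = (\<Union>j<N. (\<lambda>s. x j s \<bullet> v) ` {a..b})"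
    by blast
  moreover have "compact ((\<lambda>s. x j s \<bullet> v) ` {a..b})" if "j < N" for j
    using assms[OF that] by (intro compact_continuous_image continuous_intros) auto
  ultimately show ?thesis
    by (simp add: bounded_UN compact_imp_bounded)
qed

theorem lemma5p1:
  fixes N :: nat and \<tau>bar :: real
    and \<tau>1 \<tau>2 \<alpha> :: "real \<Rightarrow> real"
    and \<psi> :: "'d::euclidean_space \<Rightarrow> 'd \<Rightarrow> real"
    and x0 x :: "nat \<Rightarrow> real \<Rightarrow> 'd"
  assumes N2: "N \<ge> 2"
    and taubar_pos: "\<tau>bar > 0"
    and tau1_cont: "continuous_on {0..} \<tau>1"
    and tau2_cont: "continuous_on {0..} \<tau>2"
    and tau_bounds: "\<And>t. t \<ge> 0 \<Longrightarrow> 0 \<le> \<tau>1 t \<and> \<tau>1 t < \<tau>2 t \<and> \<tau>2 t \<le> \<tau>bar"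
    and alpha_cont: "continuous_on {0..\<tau>bar} \<alpha>"
    and alpha_pos: "\<And>s. s \<in> {0..\<tau>bar} \<Longrightarrow> \<alpha> s > 0"
    and psi_cont: "continuous_on UNIV (\<lambda>p. \<psi> (fst p) (snd p))"
    and psi_bdd: "bounded (range (\<lambda>p. \<psi> (fst p) (snd p)))"
    and psi_pos: "\<And>a b. \<psi> a b > 0"
    and x0_cont: "\<And>i. i < N \<Longrightarrow> continuous_on {-\<tau>bar..0} (x0 i)"
    and sol: "hk_solution N \<tau>bar \<alpha> \<tau>1 \<tau>2 \<psi> x0 x"
  shows "\<forall>v::'d. \<forall>T\<ge>0. \<forall>i<N. \<forall>t\<ge>T - \<tau>bar.
           Inf {x j s \<bullet> v | j s. j < N \<and> s \<in> {T - \<tau>bar..T}} \<le> x i t \<bullet> v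
         \<and> x i t \<bullet> v \<le> Sup {x j s \<bullet> v | j s. j < N \<and> s \<in> {T - \<tau>bar..T}}"
proof (intro allI impI)
  fix v :: 'd and T t :: real and i :: nat
  assume "0 \<le> T" "i < N" "T - \<tau>bar \<le> t"
  define S where "S = {x j s \<bullet> v | j s. j < N \<and> s \<in> {T - \<tau>bar..T}}"
  have "continuous_on {T - \<tau>bar..T} (x j)" if "j < N" for j
    using hk_solution_continuous_on[OF sol that] \<open>0 \<le> T\<close> by simp
  then have "bounded S"
    unfolding S_def by (rule bounded_inner_image_interval)
  have window: "x j s \<bullet> v \<in> S" if "j < N" "s \<in> {T - \<tau>bar..T}" for j s
    using that unfolding S_def by blast
  note inner_le_window_bound = hk_solution_inner_le_window_bound[OF sol _ _ _ _ \<open>0 \<le> T\<close> _ \<open>i < N\<close> \<open>T - \<tau>bar \<le> t\<close>]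
  have "x i t \<bullet> v \<le> Sup S"
    by (rule inner_le_window_bound)
       (use tau_bounds alpha_pos psi_pos taubar_pos window \<open>bounded S\<close> in
         \<open>auto intro: less_imp_le cSup_upper bounded_imp_bdd_above\<close>)
  moreover have "x i t \<bullet> - v \<le> - Inf S"
    by (rule inner_le_window_bound)
       (use tau_bounds alpha_pos psi_pos taubar_pos window \<open>bounded S\<close> in
         \<open>auto intro: less_imp_le cInf_lower bounded_imp_bdd_below\<close>)
  ultimately show "Inf S \<le> x i t \<bullet> v \<and> x i t \<bullet> v \<le> Sup S"
    by simp
qed

end
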